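(* Let $\alpha\in(0,1]$, $C>0$, and let $\nu$ be a Borel probability measure on $\mathbb{R}$ such that for every $\varphi\in C_b^\infty(\mathbb{R})$ with $\|\varphi\|_\infty\le1$ one has $\int\varphi'\,d\nu\le C\|\varphi'\|_\infty^{1-\alpha}$. Then for every Borel set $A\subset\mathbb{R}$, $\nu(A)\le C\lambda(A)^\alpha$, where $\lambda$ is Lebesgue measure. Moreover, if $\rho_\nu$ is the density of $\nu$, then $\rho_\nu\in L^p(\lambda)$ whenever $1<p<\frac{1}{1-\alpha}$, and $$\|\rho_\nu\|_{L^p(\lambda)}\le\Bigl(p(p-1)^{-1}+p\Bigl(\frac{1}{1-\alpha}-p\Bigr)^{-1}\Bigr)^{1/p}C^{\frac1\alpha(1-1/p)}.$$ (For $\alpha=1$, $\frac{1}{1-\alpha}$ is interpreted as $+\infty$ and the term $p(\frac{1}{1-\alpha}-p)^{-1}$ as $0$.)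
   Context: $C_b^\infty(\mathbb{R})$ is the space of bounded smooth functions on $\mathbb{R}$ with bounded derivatives of all orders; $\|\varphi\|_\infty=\sup_t|\varphi(t)|$. *)

theory Defs
  imports "HOL-Probability.Probability"
begin

definition Cb_inf :: "(real \<Rightarrow> real) set" where
  "Cb_inf = {\<phi>. \<forall>n. (\<forall>x. ((deriv ^^ n) \<phi>) differentiable (at x))
                     \<and> bounded (range ((deriv ^^ n) \<phi>))}"

definition sup_norm :: "(real \<Rightarrow> real) \<Rightarrow> real" where
  "sup_norm f = (SUP t. \<bar>f t\<bar>)"

end

theory Submission
  imports Defs "HOL-Computational_Algebra.Polynomial"
begin

text \<open>Test the hypothesis with c times a sum of smoothed ramps, one across each of finitely
  many adjacent intervals with union U, where c = 2 / \<lambda>(U) keeps the test function bounded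
  by 1. As the ramps steepen, the derivatives converge boundedly to c times the indicator of U
  (off the endpoints), so c \<nu>(U) \<le> C c^(1 - \<alpha>), i.e. \<nu>(U) \<le> C (\<lambda>(U)/2)^\<alpha>. Exhausting open
  sets by grid cells (\<nu> has no atoms) and approximating Borel sets from outside by open sets
  gives \<nu>(A) \<le> C \<lambda>(A)^\<alpha>; in particular \<nu> is absolutely continuous and has a density \<rho>.
  For the L^p bound, the layer cake formula writes the integral of \<rho>^p as the integral of
  p t^(p - 1) \<lambda>{\<rho> \<ge> t} over t \<ge> 0. By Chebyshev, t \<lambda>{\<rho> \<ge> t} is bounded both by 1 and by
  C \<lambda>{\<rho> \<ge> t}^\<alpha>, so \<lambda>{\<rho> \<ge> t} decays like 1/t below C^(1/\<alpha>) and like (C/t)^(1/(1 - \<alpha>))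
  above; integrating these two power laws gives the constant.\<close>

lemma Cb_inf_iff_derivative_chain:
  "f \<in> Cb_inf \<longleftrightarrow> (\<exists>F. F 0 = f \<and> (\<forall>n x. (F n has_real_derivative F (Suc n) x) (at x))
                         \<and> (\<forall>n. bounded (range (F n))))"
proof
  assume "f \<in> Cb_inf"
  then show "\<exists>F. F 0 = f \<and> (\<forall>n x. (F n has_real_derivative F (Suc n) x) (at x)) \<and> (\<forall>n. bounded (range (F n)))"
    by (intro exI[of _ "\<lambda>n. (deriv ^^ n) f"])
      (auto simp: Cb_inf_def DERIV_deriv_iff_real_differentiable)
next
  assume "\<exists>F. F 0 = f \<and> (\<forall>n x. (F n has_real_derivative F (Suc n) x) (at x)) \<and> (\<forall>n. bounded (range (F n)))"
  then obtain F where F0: "F 0 = f" and F': "\<And>n x. (F n has_real_derivative F (Suc n) x) (at x)"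
    and bdd: "\<And>n. bounded (range (F n))" by blast
  have "(deriv ^^ n) f = F n" for n
  proof (induction n)
    case (Suc n)
    then have "(deriv ^^ Suc n) f = deriv (F n)" by simp
    also have "\<dots> = F (Suc n)" using F' DERIV_imp_deriv by blast
    finally show ?case .
  qed (simp add: F0)
  then show "f \<in> Cb_inf"
    unfolding Cb_inf_def using F' bdd real_differentiable_def by fastforce
qed

lemma Cb_inf_const: "(\<lambda>x. c) \<in> Cb_inf"
  unfolding Cb_inf_iff_derivative_chain
  by (intro exI[of _ "\<lambda>n x. if n = 0 then c else 0"]) auto

lemma Cb_inf_add: "f \<in> Cb_inf \<Longrightarrow> g \<in> Cb_inf \<Longrightarrow> (\<lambda>x. f x + g x) \<in> Cb_inf"
  unfolding Cb_inf_iff_derivative_chain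
  by (elim exE conjE, intro exI[of _ "\<lambda>n x. _ n x + _ n x"])
    (auto intro!: derivative_eq_intros bounded_plus_comp)

lemma Cb_inf_diff: "f \<in> Cb_inf \<Longrightarrow> g \<in> Cb_inf \<Longrightarrow> (\<lambda>x. f x - g x) \<in> Cb_inf"
  unfolding Cb_inf_iff_derivative_chain
  by (elim exE conjE, intro exI[of _ "\<lambda>n x. _ n x - _ n x"])
    (auto intro!: derivative_eq_intros bounded_minus_comp)

lemma Cb_inf_cmult: "f \<in> Cb_inf \<Longrightarrow> (\<lambda>x. c * f x) \<in> Cb_inf"
  unfolding Cb_inf_iff_derivative_chain
  by (elim exE conjE, intro exI[of _ "\<lambda>n x. c * _ n x"])
    (auto intro!: derivative_eq_intros bounded_scaleR_comp[where 'b=real, simplified])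

lemma Cb_inf_sum: "(\<And>k. k \<in> K \<Longrightarrow> f k \<in> Cb_inf) \<Longrightarrow> (\<lambda>x. \<Sum>k\<in>K. f k x) \<in> Cb_inf"
  by (induction K rule: infinite_finite_induct) (auto intro: Cb_inf_const Cb_inf_add)

lemma Cb_inf_affine_comp:
  assumes "f \<in> Cb_inf" shows "(\<lambda>x. f (s * x + d)) \<in> Cb_inf"
proof -
  obtain F where F0: "F 0 = f" and F': "\<And>n x. (F n has_real_derivative F (Suc n) x) (at x)"
    and bdd: "\<And>n. bounded (range (F n))"
    using assms unfolding Cb_inf_iff_derivative_chain by blast
  have "((\<lambda>x. s ^ n * F n (s * x + d)) has_real_derivative s ^ Suc n * F (Suc n) (s * x + d)) (at x)"
    for n x by (auto intro!: derivative_eq_intros DERIV_chain2[OF F'])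
  moreover have "bounded (range (\<lambda>x. s ^ n * F n (s * x + d)))" for n
  proof -
    have "range (\<lambda>x. F n (s * x + d)) \<subseteq> range (F n)" by auto
    then show ?thesis
      using bounded_subset[OF bdd] bounded_scaleR_comp[where 'b=real, simplified] by blast
  qed
  ultimately show ?thesis
    unfolding Cb_inf_iff_derivative_chain using F0
    by (intro exI[of _ "\<lambda>n x. s ^ n * F n (s * x + d)"]) auto
qed

lemma Cb_inf_antiderivative:
  assumes "\<And>x. (f has_real_derivative g x) (at x)" "bounded (range f)" "g \<in> Cb_inf"
  shows "f \<in> Cb_inf"
proof -
  obtain G where "G 0 = g" "\<And>n x. (G n has_real_derivative G (Suc n) x) (at x)"
    "\<And>n. bounded (range (G n))"
    using assms(3) unfolding Cb_inf_iff_derivative_chain by blast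
  with assms(1,2) show ?thesis
    unfolding Cb_inf_iff_derivative_chain
    by (intro exI[of _ "case_nat f G"]) (auto split: nat.split)
qed

text \<open>The m-th derivative of tanh is a polynomial in tanh, since tanh' = 1 - tanh^2.\<close>
fun tanh_deriv_poly :: "nat \<Rightarrow> real poly" where
  "tanh_deriv_poly 0 = [:0, 1:]"
| "tanh_deriv_poly (Suc m) = pderiv (tanh_deriv_poly m) * [:1, 0, -1:]"

lemma tanh_in_Cb_inf: "tanh \<in> Cb_inf"
  unfolding Cb_inf_iff_derivative_chain
proof (intro exI[of _ "\<lambda>m x. poly (tanh_deriv_poly m) (tanh x)"] conjI allI)
  fix m :: nat and x :: real
  show "((\<lambda>x. poly (tanh_deriv_poly m) (tanh x)) has_real_derivative
      poly (tanh_deriv_poly (Suc m)) (tanh x)) (at x)"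
    by (rule DERIV_chain2[OF poly_DERIV has_field_derivative_tanh[OF _ DERIV_ident], THEN DERIV_cong])
      (auto simp: power2_eq_square algebra_simps)
next
  fix m
  have "bounded (poly (tanh_deriv_poly m) ` {-1..1})"
    by (intro compact_imp_bounded compact_continuous_image continuous_intros) auto
  moreover have "range (\<lambda>x. poly (tanh_deriv_poly m) (tanh x)) \<subseteq> poly (tanh_deriv_poly m) ` {-1..1}"
    using tanh_real_bounds by (fastforce intro: less_imp_le)
  ultimately show "bounded (range (\<lambda>x. poly (tanh_deriv_poly m) (tanh x)))"
    by (rule bounded_subset)
qed simp

lemma has_real_derivative_ln_cosh: "((\<lambda>x. ln (cosh x)) has_real_derivative tanh x) (at x)"
  by (auto intro!: derivative_eq_intros simp: tanh_def field_simps)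

lemma ln_cosh_lipschitz: "\<bar>ln (cosh u) - ln (cosh v)\<bar> \<le> \<bar>u - v\<bar>" for u v :: real
proof -
  have "((\<lambda>x. ln (cosh x)) has_field_derivative tanh z) (at z within UNIV)" for z :: real
    by (simp add: has_real_derivative_ln_cosh)
  moreover have "norm (tanh z) \<le> 1" for z :: real
    using tanh_real_bounds[of z] by (simp add: abs_le_iff)
  ultimately show ?thesis
    using field_differentiable_bound[OF convex_UNIV, of "\<lambda>x. ln (cosh x)" tanh 1 u v] by simp
qed

text \<open>A smoothing, of steepness n, of (|x - a| - |x - b|)/2, which ramps from -(b - a)/2 to
  (b - a)/2 across [a, b]. As n tends to infinity its derivative tends to the indicator of
  (a, b), except for the value 1/2 at the endpoints.\<close>
definition ln_cosh_ramp :: "real \<Rightarrow> real \<Rightarrow> real \<Rightarrow> real \<Rightarrow> real" where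
  "ln_cosh_ramp n a b x = (ln (cosh (n * (x - a))) - ln (cosh (n * (x - b)))) / (2 * n)"

lemma ln_cosh_ramp_has_real_derivative:
  "(ln_cosh_ramp n a b has_real_derivative (tanh (n * (x - a)) - tanh (n * (x - b))) / 2) (at x)"
proof -
  have "((\<lambda>x. ln (cosh (n * (x - a))) - ln (cosh (n * (x - b)))) has_real_derivative
      (tanh (n * (x - a)) - tanh (n * (x - b))) * n) (at x)"
    by (auto intro!: derivative_eq_intros DERIV_chain2[OF has_real_derivative_ln_cosh]
        simp: algebra_simps tanh_def)
  from DERIV_cdivide[OF this, of "2 * n"] show ?thesis
    unfolding ln_cosh_ramp_def by (cases "n = 0") auto
qed

lemma abs_ln_cosh_ramp_le: "\<bar>ln_cosh_ramp n a b x\<bar> \<le> \<bar>b - a\<bar> / 2"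
proof (cases "n = 0")
  case False
  have "\<bar>ln (cosh (n * (x - a))) - ln (cosh (n * (x - b)))\<bar> \<le> \<bar>n * (x - a) - n * (x - b)\<bar>"
    by (rule ln_cosh_lipschitz)
  also have "\<dots> = \<bar>n\<bar> * \<bar>b - a\<bar>"
    by (simp add: abs_mult[symmetric] algebra_simps)
  finally have "\<bar>ln (cosh (n * (x - a))) - ln (cosh (n * (x - b)))\<bar> / (2 * \<bar>n\<bar>)
      \<le> \<bar>n\<bar> * \<bar>b - a\<bar> / (2 * \<bar>n\<bar>)"
    by (rule divide_right_mono) simp
  then show ?thesis
    using False by (simp add: ln_cosh_ramp_def abs_mult)
qed (simp add: ln_cosh_ramp_def)

lemma ln_cosh_ramp_in_Cb_inf: "ln_cosh_ramp n a b \<in> Cb_inf"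
proof (rule Cb_inf_antiderivative[OF ln_cosh_ramp_has_real_derivative])
  show "bounded (range (ln_cosh_ramp n a b))"
    by (intro boundedI[where B="\<bar>b - a\<bar> / 2"]) (auto simp only: real_norm_def abs_ln_cosh_ramp_le)
  have "(\<lambda>x. tanh (n * (x - c))) \<in> Cb_inf" for c
    using Cb_inf_affine_comp[OF tanh_in_Cb_inf, of n "- n * c"] by (simp add: algebra_simps)
  from Cb_inf_cmult[OF Cb_inf_diff[OF this this], of "1/2"]
  show "(\<lambda>x. (tanh (n * (x - a)) - tanh (n * (x - b))) / 2) \<in> Cb_inf"
    by simp
qed

lemma sum_consecutive_diff_bounds:
  fixes g :: "nat \<Rightarrow> real"
  assumes "decseq g" "finite K" "\<And>k. l \<le> g k" "\<And>k. g k \<le> u"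
  shows "0 \<le> (\<Sum>k\<in>K. g k - g (Suc k))" "(\<Sum>k\<in>K. g k - g (Suc k)) \<le> u - l"
proof -
  have nonneg: "0 \<le> g k - g (Suc k)" for k
    using \<open>decseq g\<close> by (simp add: decseq_SucD)
  then show "0 \<le> (\<Sum>k\<in>K. g k - g (Suc k))" by (simp add: sum_nonneg)
  have "K \<subseteq> {..<Suc (Max K)}"
    using \<open>finite K\<close> by (auto simp: less_Suc_eq_le)
  then have "(\<Sum>k\<in>K. g k - g (Suc k)) \<le> (\<Sum>k<Suc (Max K). g k - g (Suc k))"
    by (intro sum_mono2 nonneg) auto
  also have "\<dots> = g 0 - g (Suc (Max K))" by (rule sum_lessThan_telescope')
  also have "\<dots> \<le> u - l" using assms(3,4) by (intro diff_mono)
  finally show "(\<Sum>k\<in>K. g k - g (Suc k)) \<le> u - l" .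
qed

lemma sgn_real_mono: "x \<le> y \<Longrightarrow> sgn x \<le> sgn (y :: real)"
  by (auto simp: sgn_if)

lemma tanh_consecutive_sum_bounds:
  fixes a :: "nat \<Rightarrow> real" and x s :: real
  assumes "incseq a" "finite K" "0 \<le> s"
  defines "T \<equiv> \<Sum>k\<in>K. tanh (s * (x - a k)) - tanh (s * (x - a (Suc k)))"
  shows "0 \<le> T" "T \<le> 2"
proof -
  have "decseq (\<lambda>k. tanh (s * (x - a k)))"
    using assms(1,3) by (auto simp: incseq_def decseq_def mult_left_mono)
  from sum_consecutive_diff_bounds[OF this assms(2), of "-1" 1] tanh_real_bounds
  show "0 \<le> T" "T \<le> 2"
    by (auto simp: T_def less_imp_le)
qed

lemma sgn_consecutive_sum_bounds:
  fixes a :: "nat \<Rightarrow> real" and x :: real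
  assumes "incseq a" "finite K"
  defines "S \<equiv> \<Sum>k\<in>K. sgn (x - a k) - sgn (x - a (Suc k))"
  shows "0 \<le> S" "S \<le> 2"
proof -
  have "decseq (\<lambda>k. sgn (x - a k))"
    using assms(1) by (auto simp: incseq_def decseq_def intro: sgn_real_mono)
  from sum_consecutive_diff_bounds[OF this assms(2), of "-1" 1]
  show "0 \<le> S" "S \<le> 2"
    by (auto simp: S_def sgn_real_def)
qed

lemma tendsto_tanh_mult_sgn: "(\<lambda>n. tanh (real n * y)) \<longlonglongrightarrow> sgn y"
proof -
  have pos: "(\<lambda>n. tanh (real n * z)) \<longlonglongrightarrow> 1" if "z > 0" for z
  proof -
    have "filterlim (\<lambda>n. real n * z) at_top sequentially"
      using filterlim_tendsto_pos_mult_at_top[OF tendsto_const that filterlim_real_sequentially]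
      by (simp add: mult.commute)
    then show ?thesis by (rule filterlim_compose[OF tanh_real_at_top])
  qed
  show ?thesis
  proof (cases y "0::real" rule: linorder_cases)
    case less
    then show ?thesis using tendsto_minus[OF pos[of "-y"]] by simp
  next
    case greater
    then show ?thesis using pos[of y] by simp
  qed simp
qed

lemma measure_lborel_UN_consecutive:
  fixes a :: "nat \<Rightarrow> real"
  assumes "incseq a" "finite K"
  shows "measure lborel (\<Union>k\<in>K. {a k<..<a (Suc k)}) = (\<Sum>k\<in>K. a (Suc k) - a k)"
proof -
  have le: "a j \<le> a k" if "j \<le> k" for j k
    using \<open>incseq a\<close> that by (rule incseqD)
  have "disjoint_family_on (\<lambda>k. {a k<..<a (Suc k)}) K"
    unfolding disjoint_family_on_def
  proof (intro ballI impI)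
    fix j k :: nat assume "j \<noteq> k"
    then have "a (Suc j) \<le> a k \<or> a (Suc k) \<le> a j"
      using le by (metis not_less_eq_eq nle_le)
    then show "{a j<..<a (Suc j)} \<inter> {a k<..<a (Suc k)} = {}" by auto
  qed
  then have "measure lborel (\<Union>k\<in>K. {a k<..<a (Suc k)}) = (\<Sum>k\<in>K. measure lborel {a k<..<a (Suc k)})"
    using \<open>finite K\<close> le by (intro measure_finite_Union) auto
  then show ?thesis
    using le by simp
qed

lemma sgn_sum_consecutive_ge_indicator:
  fixes a :: "nat \<Rightarrow> real"
  assumes "incseq a" "finite K"
  shows "2 * indicator (\<Union>k\<in>K. {a k<..<a (Suc k)}) x \<le> (\<Sum>k\<in>K. sgn (x - a k) - sgn (x - a (Suc k)))"
proof -
  have nonneg: "0 \<le> sgn (x - a k) - sgn (x - a (Suc k))" for k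
    using incseq_SucD[OF \<open>incseq a\<close>, of k] sgn_real_mono[of "x - a (Suc k)" "x - a k"] by simp
  show ?thesis
  proof (cases "x \<in> (\<Union>k\<in>K. {a k<..<a (Suc k)})")
    case True
    then obtain j where j: "j \<in> K" "a j < x" "x < a (Suc j)" by auto
    then have "2 = sgn (x - a j) - sgn (x - a (Suc j))" by simp
    also have "\<dots> \<le> (\<Sum>k\<in>K. sgn (x - a k) - sgn (x - a (Suc k)))"
      by (intro member_le_sum j(1) nonneg assms(2))
    finally show ?thesis using True by simp
  qed (use sum_nonneg[OF nonneg] in simp)
qed

lemma sup_norm_le: "(\<And>x. \<bar>f x\<bar> \<le> B) \<Longrightarrow> sup_norm f \<le> B"
  unfolding sup_norm_def by (rule cSUP_least) auto

lemma sup_norm_nonneg: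
  assumes "\<And>x. \<bar>f x\<bar> \<le> B" shows "0 \<le> sup_norm f"
proof -
  have "\<bar>f 0\<bar> \<le> sup_norm f"
    unfolding sup_norm_def by (rule cSUP_upper) (auto intro: bdd_aboveI2 assms)
  then show ?thesis by linarith
qed

locale deriv_test_bound = prob_space \<nu> for \<nu> :: "real measure" +
  fixes \<alpha> C :: real
  assumes alpha_pos: "0 < \<alpha>" and alpha_le_1: "\<alpha> \<le> 1" and C_pos: "0 < C"
    and sets_eq_borel: "sets \<nu> = sets borel"
    and integral_deriv_test: "\<And>\<phi>. \<phi> \<in> Cb_inf \<Longrightarrow> sup_norm \<phi> \<le> 1 \<Longrightarrow>
      integral\<^sup>L \<nu> (deriv \<phi>) \<le> C * sup_norm (deriv \<phi>) powr (1 - \<alpha>)"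
begin

lemma borel_measurable_eq [simp]: "borel_measurable \<nu> = borel_measurable borel"
  using sets_eq_borel by (rule measurable_cong_sets) simp

lemma integral_deriv_le:
  assumes "\<phi> \<in> Cb_inf" "\<And>x. \<bar>\<phi> x\<bar> \<le> 1" "\<And>x. \<bar>deriv \<phi> x\<bar> \<le> c"
  shows "integral\<^sup>L \<nu> (deriv \<phi>) \<le> C * c powr (1 - \<alpha>)"
proof -
  have "sup_norm (deriv \<phi>) powr (1 - \<alpha>) \<le> c powr (1 - \<alpha>)"
    using assms(3) alpha_le_1 by (intro powr_mono2 sup_norm_le sup_norm_nonneg) auto
  then have "C * sup_norm (deriv \<phi>) powr (1 - \<alpha>) \<le> C * c powr (1 - \<alpha>)"
    using C_pos by simp
  with integral_deriv_test[OF assms(1) sup_norm_le[OF assms(2)]] show ?thesis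
    by linarith
qed

lemma integral_le_of_pointwise_limit:
  fixes f :: "nat \<Rightarrow> real \<Rightarrow> real"
  assumes "\<And>i. f i \<in> borel_measurable borel" "g \<in> borel_measurable borel"
    and "\<And>i x. \<bar>f i x\<bar> \<le> c" "\<And>x. (\<lambda>i. f i x) \<longlonglongrightarrow> g x" "\<And>i. integral\<^sup>L \<nu> (f i) \<le> B"
  shows "integral\<^sup>L \<nu> g \<le> B"
proof -
  have "(\<lambda>i. integral\<^sup>L \<nu> (f i)) \<longlonglongrightarrow> integral\<^sup>L \<nu> g"
    by (rule integral_dominated_convergence[where w="\<lambda>_. c"]) (use assms in auto)
  then show ?thesis
    by (rule LIMSEQ_le_const2) (use assms(5) in auto)
qed

lemma integral_tanh_ramps_le:
  fixes a :: "nat \<Rightarrow> real"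
  assumes a: "incseq a" and K: "finite K" and s: "0 \<le> s"
    and c: "0 < c" "c * (\<Sum>k\<in>K. a (Suc k) - a k) \<le> 2"
  shows "integral\<^sup>L \<nu> (\<lambda>x. c / 2 * (\<Sum>k\<in>K. tanh (s * (x - a k)) - tanh (s * (x - a (Suc k)))))
    \<le> C * c powr (1 - \<alpha>)" (is "integral\<^sup>L \<nu> ?\<psi> \<le> _")
proof -
  define \<phi> where "\<phi> x = c * (\<Sum>k\<in>K. ln_cosh_ramp s (a k) (a (Suc k)) x)" for x
  have "(\<phi> has_real_derivative ?\<psi> x) (at x)" for x
    unfolding \<phi>_def
    by (rule DERIV_cmult[OF DERIV_sum[OF ln_cosh_ramp_has_real_derivative], THEN DERIV_cong])
      (simp add: sum_divide_distrib[symmetric])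
  then have deriv_\<phi>: "deriv \<phi> = ?\<psi>"
    using DERIV_imp_deriv by blast
  have "\<phi> \<in> Cb_inf"
    unfolding \<phi>_def by (intro Cb_inf_cmult Cb_inf_sum ln_cosh_ramp_in_Cb_inf)
  moreover have "\<bar>\<phi> x\<bar> \<le> 1" for x
  proof -
    have "\<bar>\<phi> x\<bar> \<le> c * (\<Sum>k\<in>K. \<bar>ln_cosh_ramp s (a k) (a (Suc k)) x\<bar>)"
      unfolding \<phi>_def using c(1) by (simp add: abs_mult sum_abs)
    also have "\<dots> \<le> c * (\<Sum>k\<in>K. \<bar>a (Suc k) - a k\<bar> / 2)"
      using c(1) by (intro mult_left_mono sum_mono abs_ln_cosh_ramp_le) auto
    also have "\<dots> = c * (\<Sum>k\<in>K. a (Suc k) - a k) / 2"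
      using incseq_SucD[OF a] by (simp add: sum_divide_distrib[symmetric])
    finally show ?thesis
      using c(2) by simp
  qed
  moreover have "\<bar>deriv \<phi> x\<bar> \<le> c" for x
    using tanh_consecutive_sum_bounds[OF a K s, of x] c(1)
      mult_left_le[of "(\<Sum>k\<in>K. tanh (s * (x - a k)) - tanh (s * (x - a (Suc k)))) / 2" c]
    by (simp add: deriv_\<phi>)
  ultimately have "integral\<^sup>L \<nu> (deriv \<phi>) \<le> C * c powr (1 - \<alpha>)"
    by (rule integral_deriv_le)
  then show ?thesis
    by (simp add: deriv_\<phi>)
qed

text \<open>As the ramps steepen, their derivatives converge boundedly to step functions.\<close>
lemma integral_sgn_steps_le:
  fixes a :: "nat \<Rightarrow> real"
  assumes a: "incseq a" and K: "finite K"
    and c: "0 < c" "c * (\<Sum>k\<in>K. a (Suc k) - a k) \<le> 2"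
  shows "integral\<^sup>L \<nu> (\<lambda>x. c / 2 * (\<Sum>k\<in>K. sgn (x - a k) - sgn (x - a (Suc k))))
    \<le> C * c powr (1 - \<alpha>)"
proof -
  define \<psi> where "\<psi> n x = c / 2 * (\<Sum>k\<in>K. tanh (real n * (x - a k)) - tanh (real n * (x - a (Suc k))))"
    for n :: nat and x
  have "\<psi> n \<in> borel_measurable borel" for n
    unfolding \<psi>_def by (intro borel_measurable_continuous_onI continuous_intros) simp_all
  moreover have "(\<lambda>x. c / 2 * (\<Sum>k\<in>K. sgn (x - a k) - sgn (x - a (Suc k)))) \<in> borel_measurable borel"
    by measurable
  moreover have "\<bar>\<psi> n x\<bar> \<le> c" for n x
    using tanh_consecutive_sum_bounds[OF a K, of "real n" x] c(1)
      mult_left_le[of "(\<Sum>k\<in>K. tanh (n * (x - a k)) - tanh (n * (x - a (Suc k)))) / 2" c]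
    by (simp add: \<psi>_def)
  moreover have "(\<lambda>n. \<psi> n x) \<longlonglongrightarrow> c / 2 * (\<Sum>k\<in>K. sgn (x - a k) - sgn (x - a (Suc k)))" for x
    unfolding \<psi>_def by (intro tendsto_intros tendsto_tanh_mult_sgn)
  moreover have "integral\<^sup>L \<nu> (\<psi> n) \<le> C * c powr (1 - \<alpha>)" for n
    unfolding \<psi>_def by (rule integral_tanh_ramps_le[OF a K _ c]) simp
  ultimately show ?thesis
    by (rule integral_le_of_pointwise_limit)
qed

lemma measure_UN_consecutive_le_integral_sgn_steps:
  fixes a :: "nat \<Rightarrow> real"
  assumes a: "incseq a" and K: "finite K" and c: "0 < c"
  shows "c * measure \<nu> (\<Union>k\<in>K. {a k<..<a (Suc k)})
    \<le> integral\<^sup>L \<nu> (\<lambda>x. c / 2 * (\<Sum>k\<in>K. sgn (x - a k) - sgn (x - a (Suc k))))"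
    (is "c * measure \<nu> ?U \<le> integral\<^sup>L \<nu> ?\<Psi>")
proof -
  have U_sets: "?U \<in> sets borel" by auto
  have "integrable \<nu> ?\<Psi>"
  proof (intro integrable_const_bound[where B=c])
    show "AE x in \<nu>. norm (?\<Psi> x) \<le> c"
    proof (rule AE_I2)
      fix x
      show "norm (?\<Psi> x) \<le> c"
        using sgn_consecutive_sum_bounds[OF a K, of x] c
          mult_left_le[of "(\<Sum>k\<in>K. sgn (x - a k) - sgn (x - a (Suc k))) / 2" c]
        by simp
    qed
  qed (unfold borel_measurable_eq, measurable)
  moreover have "c * indicator ?U x \<le> ?\<Psi> x" for x
    using sgn_sum_consecutive_ge_indicator[OF a K, of x] c by simp
  ultimately have "integral\<^sup>L \<nu> (\<lambda>x. c * indicator ?U x) \<le> integral\<^sup>L \<nu> ?\<Psi>"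
    using U_sets by (intro integral_mono) (auto simp: sets_eq_borel less_top[symmetric])
  then show ?thesis
    using U_sets by (simp add: sets_eq_borel)
qed

lemma measure_UN_consecutive_le:
  fixes a :: "nat \<Rightarrow> real"
  assumes a: "incseq a" and K: "finite K"
  defines "U \<equiv> \<Union>k\<in>K. {a k<..<a (Suc k)}"
  shows "measure \<nu> U \<le> C * measure lborel U powr \<alpha>"
proof -
  define L where "L = measure lborel U"
  have L_eq: "L = (\<Sum>k\<in>K. a (Suc k) - a k)"
    unfolding L_def U_def using a K by (rule measure_lborel_UN_consecutive)
  show ?thesis
  proof (cases "L = 0")
    case True
    then have "a (Suc k) = a k" if "k \<in> K" for k
      using that K incseq_SucD[OF a] by (simp add: L_eq sum_nonneg_eq_0_iff)
    then have "U = {}" by (auto simp: U_def)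
    then show ?thesis by simp
  next
    case False
    then have L_pos: "L > 0" by (simp add: L_def order.not_eq_order_implies_strict)
    define c where "c = 2 / L"
    have c_pos: "c > 0" using L_pos by (simp add: c_def)
    have "c * measure \<nu> U \<le> C * c powr (1 - \<alpha>)"
      unfolding U_def using c_pos L_pos
      by (intro order.trans[OF measure_UN_consecutive_le_integral_sgn_steps integral_sgn_steps_le] a K)
        (auto simp: c_def L_eq[symmetric])
    then have "measure \<nu> U \<le> C * c powr (1 - \<alpha>) / c"
      using c_pos by (simp add: le_divide_eq mult.commute)
    also have "\<dots> = C * (L / 2) powr \<alpha>"
      using c_pos by (simp add: c_def powr_diff powr_divide)
    also have "\<dots> \<le> C * L powr \<alpha>"
      using C_pos L_pos alpha_pos by (intro mult_left_mono powr_mono2) auto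
    finally show ?thesis by (simp add: L_def)
  qed
qed

end

lemma le_mult_powr_of_forall_pos_add:
  fixes m l D a :: real
  assumes "0 \<le> l" "0 < a" and le: "\<And>e. e > 0 \<Longrightarrow> m \<le> D * (l + e) powr a"
  shows "m \<le> D * l powr a"
proof (rule tendsto_le[OF trivial_limit_at_right_real])
  have "((\<lambda>e. l + e) \<longlongrightarrow> l) (at_right 0)"
    using tendsto_add[OF tendsto_const tendsto_ident_at, of l 0 "{0<..}"] by simp
  moreover have "eventually (\<lambda>e. 0 \<le> l + e) (at_right (0::real))"
    using eventually_at_right_less[of "0::real"] by eventually_elim (use assms(1) in simp)
  ultimately show "((\<lambda>e. D * (l + e) powr a) \<longlongrightarrow> D * l powr a) (at_right 0)"
    using assms(2) by (intro tendsto_mult_left tendsto_powr') auto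
  show "eventually (\<lambda>e. m \<le> D * (l + e) powr a) (at_right (0::real))"
    using eventually_at_right_less[of "0::real"] by eventually_elim (rule le)
qed simp

lemma (in finite_measure) tendsto_measure_if_tendsto_indicator:
  assumes "\<And>N. W N \<in> sets M" "A \<in> sets M"
    and "\<And>x. x \<in> space M \<Longrightarrow> (\<lambda>N. indicator (W N) x :: real) \<longlonglongrightarrow> indicator A x"
  shows "(\<lambda>N. measure M (W N)) \<longlonglongrightarrow> measure M A"
proof -
  have "(\<lambda>N. integral\<^sup>L M (indicator (W N))) \<longlonglongrightarrow> integral\<^sup>L M (indicator A :: _ \<Rightarrow> real)"
    by (rule integral_dominated_convergence[where w="\<lambda>_. 1"])
      (use assms in \<open>auto simp: indicator_def\<close>)
  then show ?thesis
    using assms(1,2) by simp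
qed

text \<open>The cells of mesh 1/(N + 1) with indices k < 2 (N + 1)^2 cover [-(N + 1), N + 1).\<close>
definition grid :: "nat \<Rightarrow> nat \<Rightarrow> real" where
  "grid N k = real k / real (Suc N) - real (Suc N)"

lemma incseq_grid: "incseq (grid N)"
  by (auto simp: incseq_def grid_def divide_right_mono)

lemma grid_Suc: "grid N (Suc k) = grid N k + 1 / real (Suc N)"
  by (simp add: grid_def add_divide_distrib)

lemma grid_cell_exists:
  assumes "\<bar>x\<bar> < real (Suc N)"
  obtains k where "k < 2 * Suc N * Suc N" "grid N k \<le> x" "x < grid N (Suc k)"
proof -
  define t where "t = (x + real (Suc N)) * real (Suc N)"
  have t_pos: "0 < t" using assms by (simp add: t_def)
  define k where "k = nat \<lfloor>t\<rfloor>"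
  have k: "real k \<le> t" "t < real k + 1"
    using t_pos by (simp_all add: k_def)
  have "grid N k \<le> x" "x < grid N (Suc k)"
    using k by (simp_all add: grid_def t_def divide_le_eq less_divide_eq algebra_simps)
  moreover have "real k < real (2 * Suc N * Suc N)"
  proof -
    have "t < 2 * real (Suc N) * real (Suc N)"
      using assms by (simp add: t_def)
    then show ?thesis using k by (simp add: algebra_simps)
  qed
  ultimately show ?thesis using that by (simp only: of_nat_less_iff)
qed

definition inner_cells :: "real set \<Rightarrow> nat \<Rightarrow> nat set" where
  "inner_cells U N = {k. k < 2 * Suc N * Suc N \<and> {grid N k .. grid N (Suc k)} \<subseteq> U}"

lemma finite_inner_cells: "finite (inner_cells U N)"
  by (rule finite_subset[of _ "{..<2 * Suc N * Suc N}"]) (auto simp: inner_cells_def)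

lemma eventually_in_inner_cell:
  assumes "open U" "x \<in> U"
  shows "eventually (\<lambda>N. \<exists>k\<in>inner_cells U N. grid N k \<le> x \<and> x < grid N (Suc k)) sequentially"
proof -
  obtain e where e: "e > 0" "ball x e \<subseteq> U"
    using assms open_contains_ball by blast
  obtain N0 where N0: "inverse (real (Suc N0)) < e"
    using reals_Archimedean[OF e(1)] by blast
  obtain N1 where N1: "\<bar>x\<bar> < real N1"
    using reals_Archimedean2 by blast
  show ?thesis
  proof (rule eventually_sequentiallyI[of "max N0 N1"])
    fix N assume N: "max N0 N1 \<le> N"
    then have "\<bar>x\<bar> < real (Suc N)" using N1 by linarith
    then obtain k where k: "k < 2 * Suc N * Suc N" "grid N k \<le> x" "x < grid N (Suc k)"
      by (rule grid_cell_exists)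
    have "1 / real (Suc N) \<le> inverse (real (Suc N0))"
      using N by (simp add: inverse_eq_divide frac_le)
    then have "{grid N k .. grid N (Suc k)} \<subseteq> ball x e"
      using k(2,3) N0 by (auto simp: grid_Suc dist_real_def)
    then have "k \<in> inner_cells U N"
      using k(1) e(2) by (auto simp: inner_cells_def)
    then show "\<exists>k\<in>inner_cells U N. grid N k \<le> x \<and> x < grid N (Suc k)"
      using k by blast
  qed
qed

lemma UN_inner_cells_subset: "(\<Union>k\<in>inner_cells U N. {grid N k ..< grid N (Suc k)}) \<subseteq> U"
proof
  fix y assume "y \<in> (\<Union>k\<in>inner_cells U N. {grid N k ..< grid N (Suc k)})"
  then obtain k where k: "k \<in> inner_cells U N" "grid N k \<le> y" "y < grid N (Suc k)"
    by auto
  then have "{grid N k .. grid N (Suc k)} \<subseteq> U" "y \<in> {grid N k .. grid N (Suc k)}"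
    by (simp_all add: inner_cells_def)
  then show "y \<in> U" by (rule subsetD)
qed

context deriv_test_bound
begin

lemma measure_Ioo_le:
  assumes "l \<le> u"
  shows "measure \<nu> {l<..<u} \<le> C * (u - l) powr \<alpha>"
  using measure_UN_consecutive_le[of "\<lambda>k. if k = 0 then l else u" "{0}"] assms
  by (auto simp: incseq_def)

lemma measure_singleton [simp]: "measure \<nu> {x} = 0"
proof -
  have "measure \<nu> {x} \<le> C * (0 + e) powr \<alpha>" if "e > 0" for e
  proof -
    have "measure \<nu> {x} \<le> measure \<nu> {x - e/2 <..< x + e/2}"
      using that by (intro finite_measure_mono) (auto simp: sets_eq_borel)
    also have "\<dots> \<le> C * (0 + e) powr \<alpha>"
      using measure_Ioo_le[of "x - e/2" "x + e/2"] that by simp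
    finally show ?thesis .
  qed
  then have "measure \<nu> {x} \<le> C * 0 powr \<alpha>"
    by (rule le_mult_powr_of_forall_pos_add[OF order.refl alpha_pos])
  then show ?thesis
    using measure_nonneg[of \<nu> "{x}"] by simp
qed

lemma measure_finite_set:
  assumes "finite E" shows "measure \<nu> E = 0"
proof -
  have "emeasure \<nu> E = (\<Sum>x\<in>E. emeasure \<nu> {x})"
    using assms by (intro emeasure_eq_sum_singleton) (auto simp: sets_eq_borel)
  also have "\<dots> = 0"
    by (simp add: emeasure_eq_measure)
  finally show ?thesis
    by (simp add: measure_def)
qed

text \<open>The half-open cells differ from the open ones by finitely many points, which \<nu> does not see.\<close>
lemma measure_UN_inner_cells_le:
  assumes U: "U \<in> sets borel" "emeasure lborel U < \<infinity>"
  shows "measure \<nu> (\<Union>k\<in>inner_cells U N. {grid N k ..< grid N (Suc k)}) \<le> C * measure lborel U powr \<alpha>"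
proof -
  define W where "W = (\<Union>k\<in>inner_cells U N. {grid N k ..< grid N (Suc k)})"
  define V where "V = (\<Union>k\<in>inner_cells U N. {grid N k <..< grid N (Suc k)})"
  define E where "E = grid N ` inner_cells U N"
  have V_sets: "V \<in> sets borel"
    unfolding V_def by (intro sets.finite_UN finite_inner_cells) simp
  have E_sets: "E \<in> sets borel"
    unfolding E_def by (intro borel_closed finite_imp_closed finite_imageI finite_inner_cells)
  have "W \<subseteq> V \<union> E"
  proof
    fix y assume "y \<in> W"
    then obtain k where k: "k \<in> inner_cells U N" "grid N k \<le> y" "y < grid N (Suc k)"
      by (auto simp: W_def)
    show "y \<in> V \<union> E"
    proof (cases "y = grid N k")
      case True
      then show ?thesis unfolding E_def using k(1) by (intro UnI2 image_eqI)
    next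
      case False
      then have "y \<in> {grid N k <..< grid N (Suc k)}" using k by simp
      then show ?thesis unfolding V_def by (intro UnI1 UN_I[OF k(1)])
    qed
  qed
  then have "measure \<nu> W \<le> measure \<nu> (V \<union> E)"
    using V_sets E_sets by (intro finite_measure_mono) (simp_all add: sets_eq_borel)
  also have "\<dots> \<le> measure \<nu> V + measure \<nu> E"
    using V_sets E_sets by (intro measure_Un_le) (simp_all add: sets_eq_borel)
  also have "\<dots> = measure \<nu> V"
    by (simp add: E_def measure_finite_set finite_inner_cells)
  also have "\<dots> \<le> C * measure lborel V powr \<alpha>"
    unfolding V_def by (intro measure_UN_consecutive_le incseq_grid finite_inner_cells)
  also have "\<dots> \<le> C * measure lborel U powr \<alpha>"
  proof -
    have "V \<subseteq> W"
      unfolding V_def W_def by (intro UN_mono) auto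
    then have "V \<subseteq> U"
      using UN_inner_cells_subset unfolding W_def by (rule order.trans)
    then have "measure lborel V \<le> measure lborel U"
      using U V_sets by (intro measure_mono_fmeasurable) (auto simp: fmeasurable_def)
    then show ?thesis
      using C_pos alpha_pos by (intro mult_left_mono powr_mono2) auto
  qed
  finally show ?thesis
    by (simp add: W_def)
qed

lemma measure_open_le:
  assumes U: "open U" "emeasure lborel U < \<infinity>"
  shows "measure \<nu> U \<le> C * measure lborel U powr \<alpha>"
proof -
  define W where "W N = (\<Union>k\<in>inner_cells U N. {grid N k ..< grid N (Suc k)})" for N
  have W_sets: "W N \<in> sets borel" for N
    unfolding W_def by (intro sets.finite_UN finite_inner_cells) simp
  have W_le: "measure \<nu> (W N) \<le> C * measure lborel U powr \<alpha>" for N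
    unfolding W_def using U by (intro measure_UN_inner_cells_le borel_open)
  have "(\<lambda>N. measure \<nu> (W N)) \<longlonglongrightarrow> measure \<nu> U"
  proof (rule tendsto_measure_if_tendsto_indicator)
    fix x
    show "(\<lambda>N. indicator (W N) x :: real) \<longlonglongrightarrow> indicator U x"
    proof (cases "x \<in> U")
      case True
      have "eventually (\<lambda>N. x \<in> W N) sequentially"
        using eventually_in_inner_cell[OF U(1) True] by eventually_elim (simp add: W_def)
      then have "eventually (\<lambda>N. indicator (W N) x = (indicator U x :: real)) sequentially"
        by eventually_elim (simp add: True)
      then show ?thesis by (rule tendsto_eventually)
    next
      case False
      then have "x \<notin> W N" for N
        using UN_inner_cells_subset unfolding W_def by blast
      then show ?thesis using False by simp
    qed
  qed (simp_all add: sets_eq_borel W_sets borel_open U(1))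
  then show ?thesis
    by (rule LIMSEQ_le_const2) (use W_le in blast)
qed

lemma measure_le:
  assumes A: "A \<in> sets borel" "emeasure lborel A < \<infinity>"
  shows "measure \<nu> A \<le> C * measure lborel A powr \<alpha>"
proof (rule le_mult_powr_of_forall_pos_add[OF measure_nonneg alpha_pos])
  fix e :: real assume "e > 0"
  obtain V where V: "open V" "A \<subseteq> V" "emeasure lborel (V - A) \<le> e"
    using outer_regular_lborel_le[OF A(1) \<open>e > 0\<close>] by blast
  have A_fm: "A \<in> fmeasurable lborel"
    using A by (intro fmeasurableI) auto
  have VA_fm: "V - A \<in> fmeasurable lborel"
    using V A(1) by (intro fmeasurableI) (auto intro: le_less_trans)
  have V_eq: "V = A \<union> (V - A)"
    using V(2) by blast
  have V_fm: "V \<in> fmeasurable lborel"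
    by (subst V_eq) (rule fmeasurable.Un[OF A_fm VA_fm])
  have "measure lborel (V - A) \<le> e"
    using V(3) emeasure_eq_measure2[OF VA_fm] \<open>e > 0\<close> by simp
  moreover have "measure lborel V \<le> measure lborel A + measure lborel (V - A)"
    using A_fm VA_fm by (subst V_eq) (intro measure_Un_le; auto)
  ultimately have "measure lborel V \<le> measure lborel A + e" by linarith
  have "measure \<nu> A \<le> measure \<nu> V"
    using V by (intro finite_measure_mono) (auto simp: sets_eq_borel)
  also have "\<dots> \<le> C * measure lborel V powr \<alpha>"
    using V_fm V(1) by (intro measure_open_le) (auto simp: fmeasurable_def)
  also have "\<dots> \<le> C * (measure lborel A + e) powr \<alpha>"
    using \<open>measure lborel V \<le> measure lborel A + e\<close> C_pos alpha_pos
    by (intro mult_left_mono powr_mono2) auto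
  finally show "measure \<nu> A \<le> C * (measure lborel A + e) powr \<alpha>" .
qed

lemma absolutely_continuous_lborel: "absolutely_continuous lborel \<nu>"
  unfolding absolutely_continuous_def
proof
  fix A :: "real set" assume "A \<in> null_sets lborel"
  then have A: "A \<in> sets borel" "emeasure lborel A = 0" by auto
  then have "measure \<nu> A \<le> 0"
    using measure_le[of A] by (simp add: measure_def)
  then have "emeasure \<nu> A = 0"
    using measure_nonneg[of \<nu> A] by (simp add: emeasure_eq_measure)
  then show "A \<in> null_sets \<nu>"
    using A by (simp add: null_sets_def sets_eq_borel)
qed

lemma density_exists:
  "\<exists>\<rho>. \<rho> \<in> borel_measurable borel \<and> (\<forall>x. 0 \<le> \<rho> x) \<and> \<nu> = density lborel (\<lambda>x. ennreal (\<rho> x))"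
proof -
  have sets: "sets \<nu> = sets lborel" by (simp add: sets_eq_borel)
  obtain D where D: "D \<in> borel_measurable lborel" "AE x in lborel. RN_deriv lborel \<nu> x = ennreal (D x)"
    "\<And>x. 0 \<le> D x"
    using sigma_finite_measure.real_RN_deriv[OF sigma_finite_lborel finite_measure_axioms
        absolutely_continuous_lborel sets] by metis
  have "density lborel (\<lambda>x. ennreal (D x)) = density lborel (RN_deriv lborel \<nu>)"
    using D(1) AE_symmetric[OF D(2)] by (intro density_cong) auto
  also have "\<dots> = \<nu>"
    by (rule sigma_finite_measure.density_RN_deriv[OF sigma_finite_lborel absolutely_continuous_lborel sets])
  finally show ?thesis
    using D(1,3) by (intro exI[of _ D]) auto
qed

end

lemma nn_integral_powr_Icc:
  fixes a c k :: real
  assumes "a > -1" "c \<ge> 0" "k \<ge> 0"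
  shows "(\<integral>\<^sup>+t. ennreal (k * t powr a) * indicator {0..c} t \<partial>lborel) = ennreal (k * (c powr (a + 1) / (a + 1)))"
proof -
  have "((\<lambda>t. k * t powr a) has_integral (k * (c powr (a + 1) / (a + 1)))) {0..c}"
    using assms by (intro has_integral_mult_right has_integral_powr_from_0) auto
  then have "((\<lambda>t. if t \<in> {0..c} then k * t powr a else 0) has_integral (k * (c powr (a + 1) / (a + 1)))) UNIV"
    by (subst has_integral_restrict_UNIV)
  then have "integral\<^sup>N lborel (\<lambda>t. if t \<in> {0..c} then k * t powr a else 0) = k * (c powr (a + 1) / (a + 1))"
    by (rule nn_integral_has_integral_lborel[rotated 2]) (use assms in auto)
  moreover have "(\<integral>\<^sup>+t. ennreal (k * t powr a) * indicator {0..c} t \<partial>lborel)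
      = integral\<^sup>N lborel (\<lambda>t. if t \<in> {0..c} then k * t powr a else 0)"
    by (rule nn_integral_cong) (simp add: indicator_def)
  ultimately show ?thesis by simp
qed

lemma nn_integral_powr_Ici:
  fixes e c k :: real
  assumes "e < -1" "c > 0" "k \<ge> 0"
  shows "(\<integral>\<^sup>+t. ennreal (k * t powr e) * indicator {c..} t \<partial>lborel) = ennreal (k * (- (c powr (e + 1)) / (e + 1)))"
proof -
  have "((\<lambda>t. k * t powr e) has_integral (k * (- (c powr (e + 1)) / (e + 1)))) {c..}"
    using assms by (intro has_integral_mult_right has_integral_powr_to_inf) auto
  then have "((\<lambda>t. if t \<in> {c..} then k * t powr e else 0) has_integral (k * (- (c powr (e + 1)) / (e + 1)))) UNIV"
    by (subst has_integral_restrict_UNIV)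
  then have "integral\<^sup>N lborel (\<lambda>t. if t \<in> {c..} then k * t powr e else 0) = k * (- (c powr (e + 1)) / (e + 1))"
    by (rule nn_integral_has_integral_lborel[rotated 2]) (use assms in auto)
  moreover have "(\<integral>\<^sup>+t. ennreal (k * t powr e) * indicator {c..} t \<partial>lborel)
      = integral\<^sup>N lborel (\<lambda>t. if t \<in> {c..} then k * t powr e else 0)"
    by (rule nn_integral_cong) (simp add: indicator_def)
  ultimately show ?thesis by simp
qed

lemma nn_integral_powr_eq_layer_cake:
  fixes \<rho> :: "real \<Rightarrow> real" and p :: real
  assumes [measurable]: "\<rho> \<in> borel_measurable borel" and \<rho>_nonneg: "\<And>x. 0 \<le> \<rho> x" and "p > 1"
  shows "(\<integral>\<^sup>+x. ennreal (\<rho> x powr p) \<partial>lborel)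
     = (\<integral>\<^sup>+t. ennreal (p * t powr (p - 1)) * indicator {0..} t * emeasure lborel {x. t \<le> \<rho> x} \<partial>lborel)"
proof -
  define f where "f x t = ennreal (p * t powr (p - 1)) * indicator {0..\<rho> x} t" for x t
  have "case_prod f = (\<lambda>z. if 0 \<le> snd z \<and> snd z \<le> \<rho> (fst z) then ennreal (p * snd z powr (p - 1)) else 0)"
    by (auto simp: f_def fun_eq_iff indicator_def)
  then have f_measurable: "case_prod f \<in> borel_measurable (lborel \<Otimes>\<^sub>M lborel)"
    by simp
  have "\<rho> x powr p = p * (\<rho> x powr (p - 1 + 1) / (p - 1 + 1))" for x
    using \<open>p > 1\<close> by simp
  then have "(\<integral>\<^sup>+x. ennreal (\<rho> x powr p) \<partial>lborel) = (\<integral>\<^sup>+x. (\<integral>\<^sup>+t. f x t \<partial>lborel) \<partial>lborel)"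
    using \<open>p > 1\<close> \<rho>_nonneg by (simp add: f_def nn_integral_powr_Icc)
  also have "\<dots> = (\<integral>\<^sup>+t. (\<integral>\<^sup>+x. f x t \<partial>lborel) \<partial>lborel)"
    using f_measurable by (rule lborel_pair.Fubini'[symmetric])
  also have "\<dots> = (\<integral>\<^sup>+t. ennreal (p * t powr (p - 1)) * indicator {0..} t * emeasure lborel {x. t \<le> \<rho> x} \<partial>lborel)"
  proof (rule nn_integral_cong)
    fix t
    have "(\<integral>\<^sup>+x. f x t \<partial>lborel)
        = (\<integral>\<^sup>+x. (ennreal (p * t powr (p - 1)) * indicator {0..} t) * indicator {x. t \<le> \<rho> x} x \<partial>lborel)"
      by (rule nn_integral_cong) (simp add: f_def indicator_def)
    also have "\<dots> = ennreal (p * t powr (p - 1)) * indicator {0..} t * emeasure lborel {x. t \<le> \<rho> x}"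
      by (rule nn_integral_cmult_indicator) measurable
    finally show "(\<integral>\<^sup>+x. f x t \<partial>lborel)
        = ennreal (p * t powr (p - 1)) * indicator {0..} t * emeasure lborel {x. t \<le> \<rho> x}" .
  qed
  finally show ?thesis .
qed

text \<open>For a level set of measure m at height t, the bounds t m \<le> 1 (Chebyshev) and
  t m \<le> C m^\<alpha> give m \<le> 1/t for small t and m \<le> (C/t)^\<beta> for t > C^(1/\<alpha>).\<close>
lemma layer_integrand_le:
  fixes t m p \<alpha> C :: real
  assumes t: "t > 0" and m: "0 \<le> m" "t * m \<le> 1" "t * m \<le> C * m powr \<alpha>"
    and C: "C > 0" and \<alpha>: "0 < \<alpha>" "\<alpha> \<le> 1" and p: "p > 1"
  defines "\<beta> \<equiv> 1 / (1 - \<alpha>)"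
  shows "p * t powr (p - 1) * m \<le>
     (if t \<le> C powr (1 / \<alpha>) then p * t powr (p - 2)
      else (if \<alpha> = 1 then 0 else p * C powr \<beta>) * t powr (p - 1 - \<beta>))"
proof (cases "t \<le> C powr (1 / \<alpha>)")
  case True
  have "m \<le> 1 / t" using m(2) t by (simp add: field_simps)
  then have "p * t powr (p - 1) * m \<le> p * t powr (p - 1) * (1 / t)"
    using p t by (intro mult_left_mono) auto
  also have "\<dots> = p * t powr (p - 2)"
    using t by (simp add: powr_diff[of t "p - 1" 1, simplified] field_simps)
  finally show ?thesis using True by simp
next
  case False
  then have t_gt: "C powr (1 / \<alpha>) < t" by simp
  show ?thesis
  proof (cases "m = 0")
    case False
    then have m_pos: "m > 0" using m(1) by simp
    have "\<alpha> \<noteq> 1"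
    proof
      assume "\<alpha> = 1"
      then have "t * m \<le> C * m" using m(1,3) by simp
      then show False using t_gt \<open>\<alpha> = 1\<close> m_pos by simp
    qed
    then have \<alpha>_lt: "\<alpha> < 1" using \<alpha> by simp
    have "m powr (1 - \<alpha>) \<le> C / t"
      using m(3) m_pos t by (simp add: powr_diff divide_simps mult.commute)
    then have "m \<le> (C / t) powr \<beta>"
      using m_pos \<alpha>_lt powr_mono2[of \<beta> "m powr (1 - \<alpha>)" "C / t"]
      by (simp add: powr_powr \<beta>_def)
    also have "\<dots> = C powr \<beta> * t powr (- \<beta>)"
      using C t by (simp add: powr_divide powr_minus_divide)
    finally have "p * t powr (p - 1) * m \<le> p * t powr (p - 1) * (C powr \<beta> * t powr (- \<beta>))"
      using p t by (intro mult_left_mono) auto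
    also have "\<dots> = p * C powr \<beta> * t powr (p - 1 - \<beta>)"
      using t by (simp add: powr_add[symmetric] algebra_simps)
    finally show ?thesis using t_gt \<open>\<alpha> \<noteq> 1\<close> by simp
  qed (use t_gt p C t in simp)
qed

lemma nn_integral_layer_majorant:
  fixes \<alpha> C p :: real
  assumes \<alpha>: "0 < \<alpha>" "\<alpha> \<le> 1" and C: "0 < C" and p: "1 < p" and p_\<alpha>: "\<alpha> = 1 \<or> p < 1 / (1 - \<alpha>)"
  defines "t\<^sub>0 \<equiv> C powr (1 / \<alpha>)" and "\<beta> \<equiv> 1 / (1 - \<alpha>)"
  shows "(\<integral>\<^sup>+t. ennreal (p * t powr (p - 2)) * indicator {0..t\<^sub>0} t
             + ennreal ((if \<alpha> = 1 then 0 else p * C powr \<beta>) * t powr (p - 1 - \<beta>)) * indicator {t\<^sub>0..} t \<partial>lborel)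
       = ennreal ((p / (p - 1) + (if \<alpha> = 1 then 0 else p / (\<beta> - p))) * C powr ((p - 1) / \<alpha>))"
proof -
  have t\<^sub>0_pos: "t\<^sub>0 > 0" using C by (simp add: t\<^sub>0_def)
  have t\<^sub>0_pow: "t\<^sub>0 powr (p - 1) = C powr ((p - 1) / \<alpha>)"
    using C by (simp add: t\<^sub>0_def powr_powr)
  have I1: "(\<integral>\<^sup>+t. ennreal (p * t powr (p - 2)) * indicator {0..t\<^sub>0} t \<partial>lborel)
      = ennreal (p / (p - 1) * C powr ((p - 1) / \<alpha>))"
    using nn_integral_powr_Icc[of "p - 2" t\<^sub>0 p] p t\<^sub>0_pos by (simp add: t\<^sub>0_pow)
  have I2: "(\<integral>\<^sup>+t. ennreal ((if \<alpha> = 1 then 0 else p * C powr \<beta>) * t powr (p - 1 - \<beta>)) * indicator {t\<^sub>0..} t \<partial>lborel)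
      = ennreal ((if \<alpha> = 1 then 0 else p / (\<beta> - p)) * C powr ((p - 1) / \<alpha>))"
  proof (cases "\<alpha> = 1")
    case False
    then have "p < \<beta>" "(1 - \<alpha>) * \<beta> = 1" using p_\<alpha> by (simp_all add: \<beta>_def)
    have "\<beta> + (p - \<beta>) / \<alpha> = (p - 1) / \<alpha>"
      using \<alpha> \<open>(1 - \<alpha>) * \<beta> = 1\<close> by (simp add: field_simps)
    then have "C powr \<beta> * t\<^sub>0 powr (p - \<beta>) = C powr ((p - 1) / \<alpha>)"
      using C by (simp add: t\<^sub>0_def powr_powr powr_add[symmetric])
    moreover have "(\<integral>\<^sup>+t. ennreal (p * C powr \<beta> * t powr (p - 1 - \<beta>)) * indicator {t\<^sub>0..} t \<partial>lborel)
        = ennreal (p * C powr \<beta> * (t\<^sub>0 powr (p - \<beta>) / (\<beta> - p)))"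
      using nn_integral_powr_Ici[of "p - 1 - \<beta>" t\<^sub>0 "p * C powr \<beta>"] \<open>p < \<beta>\<close> p t\<^sub>0_pos
      by (simp add: minus_divide_divide[of _ "\<beta> - p", symmetric])
    ultimately show ?thesis
      using False by (simp add: field_simps)
  qed simp
  have "(\<integral>\<^sup>+t. ennreal (p * t powr (p - 2)) * indicator {0..t\<^sub>0} t
             + ennreal ((if \<alpha> = 1 then 0 else p * C powr \<beta>) * t powr (p - 1 - \<beta>)) * indicator {t\<^sub>0..} t \<partial>lborel)
      = ennreal (p / (p - 1) * C powr ((p - 1) / \<alpha>))
        + ennreal ((if \<alpha> = 1 then 0 else p / (\<beta> - p)) * C powr ((p - 1) / \<alpha>))"
    unfolding I1[symmetric] I2[symmetric] by (rule nn_integral_add) auto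
  also have "\<dots> = ennreal ((p / (p - 1) + (if \<alpha> = 1 then 0 else p / (\<beta> - p))) * C powr ((p - 1) / \<alpha>))"
    using p p_\<alpha> by (subst ennreal_plus[symmetric]) (auto simp: \<beta>_def distrib_right)
  finally show ?thesis .
qed

context deriv_test_bound
begin

lemma level_set_bounds:
  fixes \<rho> :: "real \<Rightarrow> real"
  assumes [measurable]: "\<rho> \<in> borel_measurable borel" and \<rho>_nonneg: "\<And>x. 0 \<le> \<rho> x"
    and density: "\<nu> = density lborel (\<lambda>x. ennreal (\<rho> x))" and t: "t > 0"
  defines "A \<equiv> {x. t \<le> \<rho> x}"
  shows "emeasure lborel A = ennreal (measure lborel A)"
    and "t * measure lborel A \<le> 1"
    and "t * measure lborel A \<le> C * measure lborel A powr \<alpha>"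
proof -
  have A_sets [measurable]: "A \<in> sets borel" unfolding A_def by measurable
  have "ennreal t * emeasure lborel A = (\<integral>\<^sup>+x. ennreal t * indicator A x \<partial>lborel)"
    by (simp add: nn_integral_cmult_indicator)
  also have "\<dots> \<le> (\<integral>\<^sup>+x. ennreal (\<rho> x) * indicator A x \<partial>lborel)"
    by (intro nn_integral_mono) (auto simp: A_def indicator_def intro!: ennreal_leI)
  also have "\<dots> = emeasure \<nu> A"
    unfolding density by (simp add: emeasure_density)
  finally have Chebyshev: "ennreal t * emeasure lborel A \<le> emeasure \<nu> A" .
  then have "ennreal t * emeasure lborel A \<le> 1"
    using emeasure_le_1 order.trans by blast
  then have finite: "emeasure lborel A \<noteq> \<infinity>"
    using t by (auto simp: ennreal_mult_top top_unique)
  then show emeasure_A: "emeasure lborel A = ennreal (measure lborel A)"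
    by (simp add: emeasure_eq_ennreal_measure)
  have "ennreal (t * measure lborel A) \<le> ennreal (measure \<nu> A)"
    using Chebyshev t by (simp add: emeasure_A emeasure_eq_measure ennreal_mult)
  then have "t * measure lborel A \<le> measure \<nu> A"
    by simp
  moreover have "measure \<nu> A \<le> 1" by simp
  moreover have "measure \<nu> A \<le> C * measure lborel A powr \<alpha>"
    using finite by (intro measure_le) (auto simp: less_top)
  ultimately show "t * measure lborel A \<le> 1" "t * measure lborel A \<le> C * measure lborel A powr \<alpha>"
    by linarith+
qed

lemma nn_integral_density_powr_le:
  fixes \<rho> :: "real \<Rightarrow> real"
  assumes [measurable]: "\<rho> \<in> borel_measurable borel" and \<rho>_nonneg: "\<And>x. 0 \<le> \<rho> x"
    and density: "\<nu> = density lborel (\<lambda>x. ennreal (\<rho> x))"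
    and p: "1 < p" and p_\<alpha>: "\<alpha> = 1 \<or> p < 1 / (1 - \<alpha>)"
  shows "(\<integral>\<^sup>+x. ennreal (\<rho> x powr p) \<partial>lborel)
    \<le> ennreal ((p / (p - 1) + (if \<alpha> = 1 then 0 else p / (1 / (1 - \<alpha>) - p))) * C powr ((p - 1) / \<alpha>))"
proof -
  define t\<^sub>0 where "t\<^sub>0 = C powr (1 / \<alpha>)"
  define \<beta> where "\<beta> = 1 / (1 - \<alpha>)"
  define k where "k = (if \<alpha> = 1 then 0 else p * C powr \<beta>)"
  have "(\<integral>\<^sup>+x. ennreal (\<rho> x powr p) \<partial>lborel)
      = (\<integral>\<^sup>+t. ennreal (p * t powr (p - 1)) * indicator {0..} t * emeasure lborel {x. t \<le> \<rho> x} \<partial>lborel)"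
    using p \<rho>_nonneg by (intro nn_integral_powr_eq_layer_cake) auto
  also have "\<dots> \<le> (\<integral>\<^sup>+t. ennreal (p * t powr (p - 2)) * indicator {0..t\<^sub>0} t
                     + ennreal (k * t powr (p - 1 - \<beta>)) * indicator {t\<^sub>0..} t \<partial>lborel)"
  proof (intro nn_integral_mono)
    fix t :: real
    show "ennreal (p * t powr (p - 1)) * indicator {0..} t * emeasure lborel {x. t \<le> \<rho> x}
        \<le> ennreal (p * t powr (p - 2)) * indicator {0..t\<^sub>0} t + ennreal (k * t powr (p - 1 - \<beta>)) * indicator {t\<^sub>0..} t"
    proof (cases "t > 0")
      case True
      define m where "m = measure lborel {x. t \<le> \<rho> x}"
      note level = level_set_bounds[OF assms(1) \<rho>_nonneg density True, folded m_def]
      have "ennreal (p * t powr (p - 1)) * indicator {0..} t * emeasure lborel {x. t \<le> \<rho> x}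
          = ennreal (p * t powr (p - 1) * m)"
        using True p level(1) by (simp add: ennreal_mult m_def)
      also have "\<dots> \<le> ennreal (if t \<le> t\<^sub>0 then p * t powr (p - 2) else k * t powr (p - 1 - \<beta>))"
        unfolding t\<^sub>0_def k_def \<beta>_def
        by (intro ennreal_leI layer_integrand_le[OF True _ level(2,3) C_pos alpha_pos alpha_le_1 p])
          (simp add: m_def)
      also have "\<dots> \<le> ennreal (p * t powr (p - 2)) * indicator {0..t\<^sub>0} t
          + ennreal (k * t powr (p - 1 - \<beta>)) * indicator {t\<^sub>0..} t"
        using True by (cases "t \<le> t\<^sub>0") (simp_all add: indicator_def add_increasing2)
      finally show ?thesis .
    qed (use p in \<open>auto simp: indicator_def\<close>)
  qed
  also have "\<dots> = ennreal ((p / (p - 1) + (if \<alpha> = 1 then 0 else p / (1 / (1 - \<alpha>) - p))) * C powr ((p - 1) / \<alpha>))"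
    unfolding t\<^sub>0_def k_def \<beta>_def
    by (rule nn_integral_layer_majorant[OF alpha_pos alpha_le_1 C_pos p p_\<alpha>])
  finally show ?thesis .
qed

lemma density_Lp_bound:
  fixes \<rho> :: "real \<Rightarrow> real"
  assumes [measurable]: "\<rho> \<in> borel_measurable borel" and \<rho>_nonneg: "\<And>x. 0 \<le> \<rho> x"
    and density: "\<nu> = density lborel (\<lambda>x. ennreal (\<rho> x))"
    and p: "1 < p" and p_\<alpha>: "\<alpha> = 1 \<or> p < 1 / (1 - \<alpha>)"
  shows "integrable lborel (\<lambda>x. \<rho> x powr p)
    \<and> (integral\<^sup>L lborel (\<lambda>x. \<rho> x powr p)) powr (1 / p)
      \<le> (p / (p - 1) + (if \<alpha> = 1 then 0 else p / (1 / (1 - \<alpha>) - p))) powr (1 / p)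
        * C powr ((1 / \<alpha>) * (1 - 1 / p))"
proof -
  define K where "K = p / (p - 1) + (if \<alpha> = 1 then 0 else p / (1 / (1 - \<alpha>) - p))"
  have K_nonneg: "0 \<le> K" using p p_\<alpha> by (auto simp: K_def)
  have nn_le: "(\<integral>\<^sup>+x. ennreal (\<rho> x powr p) \<partial>lborel) \<le> ennreal (K * C powr ((p - 1) / \<alpha>))"
    unfolding K_def by (rule nn_integral_density_powr_le) fact+
  then have integrable: "integrable lborel (\<lambda>x. \<rho> x powr p)"
    by (intro integrableI_nonneg) (auto simp: top_unique intro: le_less_trans)
  have "integral\<^sup>L lborel (\<lambda>x. \<rho> x powr p) = enn2real (\<integral>\<^sup>+x. ennreal (\<rho> x powr p) \<partial>lborel)"
    by (intro integral_eq_nn_integral) auto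
  also have "\<dots> \<le> K * C powr ((p - 1) / \<alpha>)"
    using nn_le K_nonneg by (intro enn2real_leI) auto
  finally have "(integral\<^sup>L lborel (\<lambda>x. \<rho> x powr p)) powr (1 / p) \<le> (K * C powr ((p - 1) / \<alpha>)) powr (1 / p)"
    using p by (intro powr_mono2) auto
  also have "\<dots> = K powr (1 / p) * C powr ((1 / \<alpha>) * (1 - 1 / p))"
    using K_nonneg p alpha_pos by (simp add: powr_mult powr_powr field_simps)
  finally show ?thesis
    using integrable by (simp add: K_def)
qed

end

theorem lemma2p3:
  fixes \<alpha> C :: real and \<nu> :: "real measure"
  assumes "0 < \<alpha>" "\<alpha> \<le> 1" "0 < C"
    and "prob_space \<nu>" "sets \<nu> = sets borel"
    and hyp: "\<And>\<phi>. \<phi> \<in> Cb_inf \<Longrightarrow> sup_norm \<phi> \<le> 1 \<Longrightarrow>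
               integral\<^sup>L \<nu> (deriv \<phi>) \<le> C * sup_norm (deriv \<phi>) powr (1 - \<alpha>)"
  shows "(\<forall>A \<in> sets borel. emeasure lborel A < \<infinity> \<longrightarrow>
            measure \<nu> A \<le> C * measure lborel A powr \<alpha>)
       \<and> (\<exists>\<rho>. \<rho> \<in> borel_measurable borel \<and> (\<forall>x. 0 \<le> \<rho> x)
              \<and> \<nu> = density lborel (\<lambda>x. ennreal (\<rho> x)))
       \<and> (\<forall>\<rho> p. \<rho> \<in> borel_measurable borel \<longrightarrow> (\<forall>x. 0 \<le> \<rho> x)
              \<longrightarrow> \<nu> = density lborel (\<lambda>x. ennreal (\<rho> x))
              \<longrightarrow> 1 < p \<longrightarrow> (\<alpha> = 1 \<or> p < 1 / (1 - \<alpha>))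
              \<longrightarrow> integrable lborel (\<lambda>x. \<rho> x powr p)
                \<and> (integral\<^sup>L lborel (\<lambda>x. \<rho> x powr p)) powr (1 / p)
                   \<le> (p / (p - 1) + (if \<alpha> = 1 then 0 else p / (1 / (1 - \<alpha>) - p))) powr (1 / p)
                     * C powr ((1 / \<alpha>) * (1 - 1 / p)))"
proof -
  interpret deriv_test_bound \<nu> \<alpha> C
    using assms by (simp add: deriv_test_bound_def deriv_test_bound_axioms_def)
  show ?thesis
    using measure_le density_exists density_Lp_bound by blast
qed

end
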